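(* For all $R\in(R_1,R_\infty)$, $\check H_c(R)$ is the unique zero of the derivative $\check x_R'$ in $\overline{\mathcal H_0(R)}$. It is a simple zero if $R\ne R_c$, and a double zero if $R=R_c$.
   Context: Let $R_1=\sqrt3$, $R_c=\sqrt7$, $R_\infty=\frac{1+3\sqrt3}2$. For $R\in(R_1,R_c]$ set $\check H_c(R)=\frac{R^2-3}2$ and $\check U_R(H)=\frac{(3-10R^2+3R^4)+(1-R^4)H-2(1-R^2)H^2-H^3}{R^2(3-R^2)^2(4-3R+R^3)^2}H$. For $R\in[R_c,R_\infty)$ set $\check H_c(R)=\frac{5+4R-R^2-\sqrt{3(5-R)(1+R)(R^2-7)}}{13+2R-2R^2}$ and $\check U_R(H)=-\frac{(13+2R-2R^2)^2H}{256(5-R)^2(4+R)^2(7-R+R^2)^2}\big(8(1+R)(5-R)(19-10R-2R^2-3(1-2R)H)+12(1-2R)(13+2R-2R^2)H^2+(13+2R-2R^2)^2H^3\big)$. ($\check H_c(R)$ is the smallest positive zero of $\check U_R'$.) Let $\check x_R(H)=\check U_R(H)/\check U_R(\check H_c(R))$, a polynomial in $H$. Let $\mathcal H_0(R)$ be the connected component of $\check x_R^{-1}(\mathbb D)$ containing $0$, where $\mathbb D$ is the open unit disk, and $\overline{\mathcal H_0(R)}$ its closure; it is known that $\check x_R$ is a conformal bijection from $\mathcal H_0(R)$ onto $\mathbb D$ extending to a homeomorphism $\overline{\mathcal H_0(R)}\to\overline{\mathbb D}$. *)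

theory Defs
  imports "HOL-Analysis.Analysis"
begin

definition R1 :: real where "R1 = sqrt 3"
definition Rc :: real where "Rc = sqrt 7"
definition Rinf :: real where "Rinf = (1 + 3 * sqrt 3) / 2"

text \<open>The critical point \<open>H_c(R)\<close>; first formula on \<open>(R1, Rc]\<close>, second on \<open>[Rc, Rinf)\<close>
  (they agree at \<open>Rc\<close>).\<close>
definition Hc :: "real \<Rightarrow> real" where
  "Hc R = (if R \<le> Rc then (R^2 - 3) / 2
           else (5 + 4*R - R^2 - sqrt (3 * (5 - R) * (1 + R) * (R^2 - 7))) / (13 + 2*R - 2*R^2))"

definition U :: "real \<Rightarrow> complex \<Rightarrow> complex" where
  "U R H = (let r = complex_of_real R in
     (if R \<le> Rc then
        ((3 - 10*r^2 + 3*r^4) + (1 - r^4)*H - 2*(1 - r^2)*H^2 - H^3)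
          / (r^2 * (3 - r^2)^2 * (4 - 3*r + r^3)^2) * H
      else
        - ((13 + 2*r - 2*r^2)^2 * H) / (256 * (5 - r)^2 * (4 + r)^2 * (7 - r + r^2)^2)
          * (8*(1 + r)*(5 - r)*(19 - 10*r - 2*r^2 - 3*(1 - 2*r)*H)
             + 12*(1 - 2*r)*(13 + 2*r - 2*r^2)*H^2 + (13 + 2*r - 2*r^2)^2 * H^3)))"

definition xR :: "real \<Rightarrow> complex \<Rightarrow> complex" where
  "xR R H = U R H / U R (complex_of_real (Hc R))"

definition H0 :: "real \<Rightarrow> complex set" where
  "H0 R = connected_component_set (xR R -` ball 0 1) 0"

end

theory Submission
  imports Defs
begin

(* In both regimes xR R is a quartic with a critical point at h = Hc R > 0, and its Taylor
   expansion there has the shape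
     xR R z = 1 + a w^2 + b w^3 + c w^4,   w = z - h,   a <= 0 < b,  c < 0,
   with a = 0 exactly when R = Rc; this gives the order of the zero of the derivative at h.
   On the rays arg w = +-2 pi/3 the cube w^3 = -8 (Re w)^3 is real and nonnegative while
   a Re (w^2) and c Re (w^4) are nonnegative, so Re (xR R) >= 1 there. Hence the component
   of the preimage of the unit disc containing 0 (where w = -h) stays inside the sector between
   these rays, and its closure lies in the half-plane Re w <= 0. There the derivative
   w (2a + 3b w + 4c w^2) vanishes only at w = 0: the quadratic factor has imaginary part
   Im w (3b + 8c Re w) with 3b + 8c Re w > 0, and it is negative on the negative real axis.
   Finally h lies in the closure because xR R maps the segment [0, h) into [0, 1). *)

locale quartic_critical =
  fixes x :: "complex \<Rightarrow> complex" and h a b c :: real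
  assumes x_eq: "\<And>z::complex. x z = 1 + a * (z - h)^2 + b * (z - h)^3 + c * (z - h)^4"
    and x_0: "x 0 = 0"
    and h_pos: "0 < h" and a_nonpos: "a \<le> 0" and b_pos: "0 < b" and c_neg: "c < 0"
begin

lemma deriv_x: "deriv x = (\<lambda>z::complex. (z - h) * (2*a + 3*b*(z - h) + 4*c*(z - h)^2))"
  unfolding x_eq[abs_def]
  by (rule ext, rule DERIV_imp_deriv)
     (auto intro!: derivative_eq_intros simp: algebra_simps power2_eq_square power3_eq_cube)

lemma deriv2_x: "deriv (deriv x) = (\<lambda>z::complex. 2*a + 6*b*(z - h) + 12*c*(z - h)^2)"
  unfolding deriv_x
  by (rule ext, rule DERIV_imp_deriv)
     (auto intro!: derivative_eq_intros simp: algebra_simps power2_eq_square)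

lemma deriv3_x: "deriv (deriv (deriv x)) = (\<lambda>z::complex. 6*b + 24*c*(z - h))"
  unfolding deriv2_x
  by (rule ext, rule DERIV_imp_deriv)
     (auto intro!: derivative_eq_intros simp: algebra_simps power2_eq_square)

text \<open>The hypotheses describe the two rays \<open>arg (z - h) = \<plusminus>2\<pi>/3\<close>.\<close>

lemma one_le_Re_x_on_rays:
  fixes z :: complex
  assumes "Re z \<le> h" and "(Im z)^2 = 3 * (Re z - h)^2"
  shows "1 \<le> Re (x z)"
proof -
  define w where "w = z - h"
  have v2: "(Im w)^2 = 3 * (Re w)^2"
    using assms(2) by (simp add: w_def)
  have w3: "w^3 = - 8 * (Re w)^3"
  proof (rule complex_eqI)
    have "Re (w^3) = Re w * ((Re w)^2 - 3 * (Im w)^2)"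
      by (simp add: power2_eq_square power3_eq_cube algebra_simps)
    also have "\<dots> = - 8 * (Re w)^3"
      unfolding v2 by (simp add: power2_eq_square power3_eq_cube)
    finally show "Re (w^3) = Re (- 8 * (Re w)^3)"
      by (simp flip: of_real_power)
    have "Im (w^3) = Im w * (3 * (Re w)^2 - (Im w)^2)"
      by (simp add: power2_eq_square power3_eq_cube algebra_simps)
    then show "Im (w^3) = Im (- 8 * (Re w)^3)"
      by (simp add: v2 flip: of_real_power)
  qed
  have "Re (w^2) = - 2 * (Re w)^2"
    using v2 by (simp add: power2_eq_square algebra_simps)
  moreover have "Re (w^4) = - 8 * (Re w)^4"
    using arg_cong[OF w3, of "\<lambda>v. Re (v * w)"]
    by (simp add: power_Suc2 power3_eq_cube power4_eq_xxxx flip: of_real_power)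
  ultimately have "Re (x z) = 1 - 2*a*(Re w)^2 - 8*b*(Re w)^3 - 8*c*(Re w)^4"
    by (simp add: x_eq w3 flip: w_def)
  moreover have "Re w \<le> 0"
    using assms(1) by (simp add: w_def)
  moreover have "a * (Re w)^2 \<le> 0"
    using a_nonpos by (simp add: mult_nonpos_nonneg)
  moreover have "b * (Re w)^3 \<le> 0"
    using b_pos power_mono_odd[of 3 "Re w" 0] \<open>Re w \<le> 0\<close> by (simp add: mult_nonneg_nonpos)
  moreover have "c * (Re w)^4 \<le> 0"
    using c_neg by (simp add: mult_nonpos_nonneg)
  ultimately show ?thesis
    by linarith
qed

lemma closure_component_subset_halfplane:
  "closure (connected_component_set (x -` ball 0 1) 0) \<subseteq> {z. Re z \<le> h}"
proof -
  define S where "S = {z. Re z < h \<and> (Im z)^2 < 3 * (Re z - h)^2}"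
  define T where "T = {z. h < Re z \<or> 3 * (Re z - h)^2 < (Im z)^2}"
  define C where "C = connected_component_set (x -` ball 0 1) 0"
  have "open S" "open T"
    unfolding S_def T_def
    by (intro open_Collect_conj open_Collect_disj open_Collect_less continuous_intros)+
  have sublevel_split: "x -` ball 0 1 \<subseteq> S \<union> T"
  proof
    fix z assume "z \<in> x -` ball 0 1"
    then have "Re (x z) < 1"
      using complex_Re_le_cmod[of "x z"] by simp
    show "z \<in> S \<union> T"
    proof (rule ccontr)
      assume "z \<notin> S \<union> T"
      then have "Re z \<le> h" and "(Im z)^2 \<le> 3 * (Re z - h)^2"
        by (auto simp: T_def)
      moreover have "3 * (Re z - h)^2 \<le> (Im z)^2"
        using \<open>z \<notin> S \<union> T\<close> \<open>Re z \<le> h\<close> by (cases "Re z = h") (auto simp: S_def)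
      ultimately show False
        using one_le_Re_x_on_rays[of z] \<open>Re (x z) < 1\<close> by simp
    qed
  qed
  have "connected C" "C \<subseteq> x -` ball 0 1" "0 \<in> C"
    using x_0 by (simp_all add: C_def connected_component_subset)
  moreover have "0 \<in> S" "S \<inter> T = {}"
    using h_pos by (auto simp: S_def T_def)
  ultimately have "C \<subseteq> S"
    using connectedD[OF \<open>connected C\<close> \<open>open S\<close> \<open>open T\<close>] sublevel_split by blast
  moreover have "S \<subseteq> {z. Re z \<le> h}" "closed {z. Re z \<le> h}"
    by (auto simp: S_def intro!: closed_Collect_le continuous_intros)
  ultimately show ?thesis
    unfolding C_def by (meson closure_minimal order_trans)
qed

lemma x_real_segment_in_sublevel:
  assumes "0 \<le> t" and "t < h"
  shows "x (of_real t) \<in> ball 0 1"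
proof -
  define g where "g s = 1 + a * s^2 + b * s^3 + c * s^4" for s :: real
  define s where "s = t - h"
  have "-h \<le> s" "s < 0"
    using assms by (auto simp: s_def)
  have x_t: "x (of_real t) = of_real (g s)"
    by (simp add: x_eq g_def s_def)
  have "of_real (g (-h)) = (0::complex)"
    using x_0 by (simp add: x_eq g_def)
  then have g_left: "g (-h) = 0"
    by (simp only: of_real_eq_0_iff)
  have "s^2 \<le> h^2" "s^4 \<le> h^4"
    using power_mono[of "-s" h 2] power_mono[of "-s" h 4] \<open>-h \<le> s\<close> \<open>s < 0\<close> by auto
  then have "a * h^2 \<le> a * s^2" "c * h^4 \<le> c * s^4"
    using mult_left_mono_neg a_nonpos c_neg by auto
  moreover have "b * (-h)^3 \<le> b * s^3"
    using mult_left_mono[OF power_mono_odd[of 3 "-h" s]] \<open>-h \<le> s\<close> b_pos by simp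
  ultimately have "g (-h) \<le> g s"
    unfolding g_def by simp
  moreover have "g s < 1"
  proof -
    have "a * s^2 \<le> 0"
      using a_nonpos by (simp add: mult_nonpos_nonneg)
    moreover have "b * s^3 < 0"
      using b_pos \<open>s < 0\<close> by (simp add: mult_pos_neg power_less_zero_eq)
    moreover have "c * s^4 < 0"
      using c_neg \<open>s < 0\<close> by (simp add: mult_neg_pos)
    ultimately show ?thesis
      unfolding g_def by linarith
  qed
  ultimately show ?thesis
    using g_left by (simp add: x_t)
qed

lemma center_in_closure_component:
  "of_real h \<in> closure (connected_component_set (x -` ball 0 1) 0)"
proof -
  define C where "C = connected_component_set (x -` ball 0 1) 0"
  have "of_real ` {0..<h} \<subseteq> C"
    unfolding C_def
  proof (rule connected_component_maximal)
    show "0 \<in> of_real ` {0..<h}"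
      using h_pos by force
    show "connected (of_real ` {0..<h} :: complex set)"
      by (intro connected_continuous_image continuous_intros) (simp add: is_interval_connected)
    show "of_real ` {0..<h} \<subseteq> x -` ball 0 1"
      using x_real_segment_in_sublevel by auto
  qed
  then have "of_real ` closure {0..<h} \<subseteq> closure C"
    by (intro image_closure_subset continuous_intros closed_closure)
       (meson closure_subset order_trans)
  then show ?thesis
    using h_pos by (auto simp: C_def)
qed

lemma deriv_x_eq_0_imp_center:
  assumes "Re z \<le> h" and "deriv x z = 0"
  shows "z = h"
proof (rule ccontr)
  define w where "w = z - h"
  define q where "q = 2*a + 3*b*w + 4*c*w^2"
  assume "z \<noteq> h"
  then have "w \<noteq> 0" "q = 0"
    using assms(2) by (auto simp: deriv_x w_def q_def)
  have "Re w \<le> 0"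
    using assms(1) by (simp add: w_def)
  have "Im q = Im w * (3*b + 8*c*Re w)"
    by (simp add: q_def power2_eq_square algebra_simps)
  moreover have "0 < 3*b + 8*c*Re w"
    using b_pos c_neg \<open>Re w \<le> 0\<close> by (smt (verit) mult_nonpos_nonpos)
  ultimately have "Im w = 0"
    using \<open>q = 0\<close> by simp
  then have "Re w < 0"
    using \<open>w \<noteq> 0\<close> \<open>Re w \<le> 0\<close> complex_eqI[of w 0] by force
  have "Re q = 2*a + 3*b*Re w + 4*c*(Re w)^2"
    using \<open>Im w = 0\<close> by (simp add: q_def power2_eq_square)
  moreover have "b * Re w < 0" "c * (Re w)^2 < 0"
    using b_pos c_neg \<open>Re w < 0\<close> by (simp_all add: mult_pos_neg mult_neg_pos)
  ultimately show False
    using \<open>q = 0\<close> a_nonpos by simp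
qed

lemma derivs_x_center:
  shows "deriv x h = 0" and "(deriv ^^ 2) x h = 2*a" and "(deriv ^^ 3) x h = 6*b"
proof -
  show "deriv x h = 0"
    by (simp add: deriv_x)
  show "(deriv ^^ 2) x h = 2*a"
    by (simp add: numeral_2_eq_2 deriv2_x)
  show "(deriv ^^ 3) x h = 6*b"
    by (simp add: numeral_3_eq_3 deriv3_x)
qed

end

lemma quartic_critical_quotient:
  fixes p :: "complex \<Rightarrow> complex" and h p0 p2 p3 p4 :: real
  assumes p_eq: "\<And>z::complex. p z = p0 + p2 * (z - h)^2 + p3 * (z - h)^3 + p4 * (z - h)^4"
    and "p 0 = 0" and "0 < h" and "p2 / p0 \<le> 0" and "0 < p3 / p0" and "p4 / p0 < 0"
  shows "quartic_critical (\<lambda>z. p z / p h) h (p2 / p0) (p3 / p0) (p4 / p0)"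
proof -
  have "p0 \<noteq> 0"
    using \<open>0 < p3 / p0\<close> by auto
  then have "p z / p h = 1 + (p2 / p0) * (z - h)^2 + (p3 / p0) * (z - h)^3 + (p4 / p0) * (z - h)^4"
    for z :: complex
    by (simp add: p_eq field_simps)
  with assms(2-) show ?thesis
    by unfold_locales simp_all
qed

lemma xR_eq_quotient:
  assumes "\<And>z. U R z = K * p z" and "K \<noteq> 0"
  shows "xR R = (\<lambda>z. p z / p (Hc R))"
  using assms by (simp add: xR_def fun_eq_iff)

lemma Taylor_expansion_below_Rc:
  fixes r z :: "'a::field_char_0"
  shows "((3 - 10*r^2 + 3*r^4) + (1 - r^4)*z - 2*(1 - r^2)*z^2 - z^3) * z
    = (r^2 - 3)^2 * (14*r^2 - r^4 - 1) / 16 + (r^2 - 7) * (r^2 + 1) / 2 * (z - (r^2 - 3) / 2)^2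
      + 4 * (z - (r^2 - 3) / 2)^3 - (z - (r^2 - 3) / 2)^4"
  by (simp add: field_simps) algebra

lemma below_Rc_bounds:
  assumes "R1 < R" and "R \<le> Rc"
  shows "0 < R" and "3 < R^2" and "R^2 \<le> 7"
proof -
  show "0 < R"
    using assms(1) real_sqrt_gt_zero[of 3] unfolding R1_def by linarith
  show "3 < R^2"
    using power_strict_mono[OF assms(1)[unfolded R1_def], of 2] by simp
  show "R^2 \<le> 7"
    using power_mono[OF assms(2)[unfolded Rc_def], of 2] \<open>0 < R\<close> by simp
qed

lemma xR_quartic_below_Rc:
  assumes "R1 < R" and "R \<le> Rc"
  shows "\<exists>a b c. quartic_critical (xR R) (Hc R) a b c \<and> (a = 0 \<longleftrightarrow> R = Rc)"
proof -
  have "0 < R" "3 < R^2" "R^2 \<le> 7"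
    using below_Rc_bounds[OF assms] by simp_all
  define p0 where "p0 = (R^2 - 3)^2 * (14*R^2 - R^4 - 1) / 16"
  define p2 where "p2 = (R^2 - 7) * (R^2 + 1) / 2"
  define den where "den = R^2 * (3 - R^2)^2 * (4 - 3*R + R^3)^2"
  define p where "p z = ((3 - 10*R^2 + 3*R^4) + (1 - R^4)*z - 2*(1 - R^2)*z^2 - z^3) * z"
    for z :: complex
  have "Hc R = (R^2 - 3) / 2"
    using assms(2) by (simp add: Hc_def)
  then have Hc_complex: "complex_of_real (Hc R) = ((of_real R)^2 - 3) / 2"
    by (simp only:) simp
  have "0 < 4 - 3*R + R^3"
    using mult_pos_pos[OF \<open>0 < R\<close>, of "R^2 - 3"] \<open>3 < R^2\<close>
    by (simp add: algebra_simps power2_eq_square power3_eq_cube)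
  then have "den \<noteq> 0"
    using \<open>0 < R\<close> \<open>3 < R^2\<close> by (simp add: den_def)
  have "U R z = inverse (of_real den) * p z" for z :: complex
    using assms(2) by (simp add: U_def Let_def p_def den_def divide_inverse_commute)
  then have xR_eq: "xR R = (\<lambda>z. p z / p (Hc R))"
    by (rule xR_eq_quotient) (use \<open>den \<noteq> 0\<close> in simp)
  have p_Taylor: "p z = p0 + p2 * (z - Hc R)^2 + of_real 4 * (z - Hc R)^3 + of_real (-1) * (z - Hc R)^4"
    for z :: complex
    using Taylor_expansion_below_Rc[of "of_real R" z] by (simp add: p_def p0_def p2_def Hc_complex)
  have "(7 - R^2)^2 < 4^2"
    using \<open>3 < R^2\<close> \<open>R^2 \<le> 7\<close> by (intro power_strict_mono) auto
  then have "0 < 14*R^2 - R^4 - 1"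
    by (simp add: power2_eq_square power4_eq_xxxx algebra_simps)
  then have "0 < p0"
    using \<open>3 < R^2\<close> by (simp add: p0_def)
  moreover have "p2 \<le> 0" and "p2 = 0 \<longleftrightarrow> R = Rc"
    using \<open>R^2 \<le> 7\<close> \<open>0 < R\<close> real_sqrt_unique[of R 7]
    by (auto simp: p2_def Rc_def mult_nonpos_nonneg add_nonneg_eq_0_iff)
  moreover have "0 < Hc R"
    using \<open>3 < R^2\<close> \<open>Hc R = (R^2 - 3) / 2\<close> by simp
  ultimately have "quartic_critical (xR R) (Hc R) (p2 / p0) (4 / p0) (-1 / p0)"
    unfolding xR_eq by (intro quartic_critical_quotient[OF p_Taylor]) (simp_all add: p_def divide_nonpos_pos)
  moreover have "p2 / p0 = 0 \<longleftrightarrow> R = Rc"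
    using \<open>0 < p0\<close> \<open>p2 = 0 \<longleftrightarrow> R = Rc\<close> by simp
  ultimately show ?thesis
    by blast
qed

lemma sqrt_mult_between:
  fixes k m :: real
  assumes "0 \<le> k" and "k < m"
  shows "k \<le> sqrt (k * m)" and "sqrt (k * m) < m"
proof -
  have "sqrt (k * k) \<le> sqrt (k * m)"
    using assms by (intro real_sqrt_le_mono mult_left_mono) auto
  then show "k \<le> sqrt (k * m)"
    using assms(1) by simp
  have "sqrt (k * m) < sqrt (m * m)"
    using assms by (intro real_sqrt_less_mono mult_strict_right_mono) auto
  then show "sqrt (k * m) < m"
    using assms by simp
qed

lemma above_Rc_bounds:
  assumes "Rc < R" and "R < Rinf"
  shows "2 < R" and "R < 4" and "7 < R^2" and "0 < 13 + 2*R - 2*R^2"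
proof -
  show "7 < R^2"
    using power_strict_mono[OF assms(1)[unfolded Rc_def], of 2] by simp
  moreover have "0 < R"
    using assms(1) real_sqrt_gt_zero[of 7] unfolding Rc_def by linarith
  ultimately show "2 < R"
    using power_less_imp_less_base[of 2 2 R] by simp
  have "2*R - 1 < 3 * sqrt 3"
    using assms(2) by (simp add: Rinf_def field_simps)
  then have "(2*R - 1)^2 < (3 * sqrt 3)^2"
    using \<open>2 < R\<close> by (intro power_strict_mono) auto
  then show "0 < 13 + 2*R - 2*R^2"
    by (simp add: power_mult_distrib power2_eq_square algebra_simps)
  then show "R < 4"
  proof (rule contrapos_pp)
    assume "\<not> R < 4"
    then have "4 * R \<le> R^2"
      using mult_right_mono[of 4 R R] by (simp add: power2_eq_square)
    then show "\<not> 0 < 13 + 2*R - 2*R^2"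
      using \<open>\<not> R < 4\<close> by simp
  qed
qed

lemma Hc_above_Rc:
  assumes "Rc < R" and "R < Rinf"
  defines "A \<equiv> 13 + 2*R - 2*R^2" and "m \<equiv> (5 - R)*(1 + R)"
    and "q \<equiv> sqrt (3*(R^2 - 7) * ((5 - R)*(1 + R)))"
  shows "A * Hc R = m - q" and "A * (Hc R)^2 - 2*m * Hc R + 2*m = 0"
    and "q^2 = 3*(R^2 - 7) * m" and "0 < q" and "0 < Hc R" and "Hc R \<le> 2"
proof -
  note bounds = above_Rc_bounds[OF assms(1,2)]
  have "0 < A"
    using bounds by (simp add: A_def)
  have "m - 3*(R^2 - 7) = 2*A"
    by (simp add: A_def m_def algebra_simps power2_eq_square)
  then have "3*(R^2 - 7) \<le> q" and "q < m"
    using sqrt_mult_between[of "3*(R^2 - 7)" m] bounds \<open>0 < A\<close> by (simp_all add: q_def m_def)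
  have "Hc R = (m - q) / A"
    using assms(1) by (simp add: Hc_def A_def m_def q_def algebra_simps power2_eq_square)
  then show Ah: "A * Hc R = m - q"
    using \<open>0 < A\<close> by simp
  show q2: "q^2 = 3*(R^2 - 7) * m"
    using bounds \<open>q < m\<close> \<open>3*(R^2 - 7) \<le> q\<close> unfolding q_def m_def by (simp add: real_sqrt_pow2_iff)
  have "0 < 3*(R^2 - 7)"
    using bounds by simp
  then show "0 < q"
    using \<open>3*(R^2 - 7) \<le> q\<close> by linarith
  have "A * (A * (Hc R)^2 - 2*m * Hc R + 2*m) = 0"
    using Ah q2 unfolding A_def m_def by algebra
  then show "A * (Hc R)^2 - 2*m * Hc R + 2*m = 0"
    using \<open>0 < A\<close> by simp
  have "0 < A * Hc R"
    using Ah \<open>q < m\<close> by simp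
  then show "0 < Hc R"
    using \<open>0 < A\<close> zero_less_mult_pos by blast
  have "A * Hc R \<le> A * 2"
    using Ah \<open>3*(R^2 - 7) \<le> q\<close> \<open>m - 3*(R^2 - 7) = 2*A\<close> by linarith
  then show "Hc R \<le> 2"
    using \<open>0 < A\<close> by simp
qed

lemma Taylor_coefficient_signs_above_Rc:
  assumes "Rc < R" and "R < Rinf"
  defines "A \<equiv> 13 + 2*R - 2*R^2" and "m \<equiv> (5 - R)*(1 + R)" and "h \<equiv> Hc R"
  shows "(8*(1 + R)*(5 - R)*(19 - 10*R - 2*R^2 - 3*(1 - 2*R)*h) + 12*(1 - 2*R)*A*h^2 + A^2*h^3) * h < 0"
    and "0 < 6*A^2*h^2 + 36*(1 - 2*R)*A*h - 24*m*(1 - 2*R)"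
    and "4*A^2*h + 12*(1 - 2*R)*A < 0"
proof -
  define q where "q = sqrt (3*(R^2 - 7) * m)"
  note bounds = above_Rc_bounds[OF assms(1,2)]
  note Hc = Hc_above_Rc[OF assms(1,2), folded A_def m_def h_def, folded q_def]
  have "0 < m"
    using bounds by (simp add: m_def)
  have "(8*(1 + R)*(5 - R)*(19 - 10*R - 2*R^2 - 3*(1 - 2*R)*h) + 12*(1 - 2*R)*A*h^2 + A^2*h^3) * h
      = 6*m*h * ((2*R - 1)*h - 2*(R^2 + 4*R - 9))"
    using Hc(2) unfolding A_def m_def by algebra
  moreover have "(2*R - 1)*h < 2*(R^2 + 4*R - 9)"
  proof -
    have "(2*R - 1)*h \<le> (2*R - 1)*2"
      using Hc(6) bounds by (intro mult_left_mono) auto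
    then show ?thesis
      using bounds by simp
  qed
  ultimately show "(8*(1 + R)*(5 - R)*(19 - 10*R - 2*R^2 - 3*(1 - 2*R)*h) + 12*(1 - 2*R)*A*h^2 + A^2*h^3) * h < 0"
    using \<open>0 < m\<close> Hc(5) by (simp add: mult_pos_neg)
  have "6*A^2*h^2 + 36*(1 - 2*R)*A*h - 24*m*(1 - 2*R) = 12*(m*(R^2 - 7) + (R^2 + 2*R - 8)*q)"
    using Hc(1,3) unfolding A_def m_def by algebra
  moreover have "0 < (R^2 + 2*R - 8)*q"
    using bounds Hc(4) by simp
  moreover have "0 < m * (R^2 - 7)"
    using \<open>0 < m\<close> bounds by simp
  ultimately show "0 < 6*A^2*h^2 + 36*(1 - 2*R)*A*h - 24*m*(1 - 2*R)"
    by (metis add_pos_pos mult_pos_pos zero_less_numeral)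
  have "4*A^2*h + 12*(1 - 2*R)*A = 4*A*(m - q + 3*(1 - 2*R))"
    using Hc(1) by algebra
  moreover have "m - q + 3*(1 - 2*R) < 0"
    using bounds Hc(4) by (simp add: m_def algebra_simps power2_eq_square)
  ultimately show "4*A^2*h + 12*(1 - 2*R)*A < 0"
    using bounds by (simp add: A_def mult_pos_neg)
qed

lemma Taylor_expansion_above_Rc:
  fixes r h z :: "'a::field"
  defines "A \<equiv> 13 + 2*r - 2*r^2" and "m \<equiv> (5 - r)*(1 + r)"
  assumes rel: "A*h^2 - 2*m*h + 2*m = 0" and "A \<noteq> 0"
  shows "(8*(1 + r)*(5 - r)*(19 - 10*r - 2*r^2 - 3*(1 - 2*r)*z) + 12*(1 - 2*r)*A*z^2 + A^2*z^3) * z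
    = (8*(1 + r)*(5 - r)*(19 - 10*r - 2*r^2 - 3*(1 - 2*r)*h) + 12*(1 - 2*r)*A*h^2 + A^2*h^3) * h
      + (6*A^2*h^2 + 36*(1 - 2*r)*A*h - 24*m*(1 - 2*r)) * (z - h)^2
      + (4*A^2*h + 12*(1 - 2*r)*A) * (z - h)^3 + A^2 * (z - h)^4"
proof -
  \<comment> \<open>The linear Taylor coefficient at \<open>h\<close> (the bracket) is a multiple of the relation.\<close>
  have "A * (4*A^2*h^3 + 36*(1 - 2*r)*A*h^2 - 48*m*(1 - 2*r)*h + 8*m*(19 - 10*r - 2*r^2)) = 0"
    using rel unfolding A_def m_def by algebra
  then have "4*A^2*h^3 + 36*(1 - 2*r)*A*h^2 - 48*m*(1 - 2*r)*h + 8*m*(19 - 10*r - 2*r^2) = 0"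
    using \<open>A \<noteq> 0\<close> by simp
  then show ?thesis
    unfolding A_def m_def by algebra
qed

lemma xR_quartic_above_Rc:
  assumes "Rc < R" and "R < Rinf"
  shows "\<exists>a b c. quartic_critical (xR R) (Hc R) a b c \<and> a \<noteq> 0"
proof -
  define A where "A = 13 + 2*R - 2*R^2"
  define m where "m = (5 - R)*(1 + R)"
  define h where "h = Hc R"
  define p0 where "p0 = (8*(1 + R)*(5 - R)*(19 - 10*R - 2*R^2 - 3*(1 - 2*R)*h) + 12*(1 - 2*R)*A*h^2 + A^2*h^3) * h"
  define p2 where "p2 = 6*A^2*h^2 + 36*(1 - 2*R)*A*h - 24*m*(1 - 2*R)"
  define p3 where "p3 = 4*A^2*h + 12*(1 - 2*R)*A"
  define p where "p z = (8*(1 + R)*(5 - R)*(19 - 10*R - 2*R^2 - 3*(1 - 2*R)*z) + 12*(1 - 2*R)*A*z^2 + A^2*z^3) * z"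
    for z :: complex
  define den where "den = 256 * (5 - R)^2 * (4 + R)^2 * (7 - R + R^2)^2"
  note bounds = above_Rc_bounds[OF assms]
  note Hc = Hc_above_Rc[OF assms, folded A_def m_def h_def]
  have "p0 < 0" "0 < p2" "p3 < 0"
    using Taylor_coefficient_signs_above_Rc[OF assms] by (simp_all add: p0_def p2_def p3_def A_def m_def h_def)
  have "0 < A" "den \<noteq> 0"
    using bounds by (simp_all add: A_def den_def)
  have A_complex: "complex_of_real A = 13 + 2 * of_real R - 2 * (of_real R)^2"
    by (simp add: A_def)
  have den_complex: "complex_of_real den = 256 * (5 - of_real R)^2 * (4 + of_real R)^2 * (7 - of_real R + (of_real R)^2)^2"
    by (simp add: den_def)
  have "U R z = complex_of_real (- (A^2) / den) * p z" for z :: complex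
    using assms(1) unfolding U_def Let_def A_complex[symmetric] den_complex[symmetric]
    by (simp add: p_def divide_inverse mult_ac)
  then have xR_eq: "xR R = (\<lambda>z. p z / p h)"
    unfolding h_def by (rule xR_eq_quotient) (use \<open>0 < A\<close> \<open>den \<noteq> 0\<close> in simp)
  have m_complex: "complex_of_real m = (5 - of_real R) * (1 + of_real R)"
    by (simp add: m_def)
  have "complex_of_real A * (of_real h)^2 - 2 * of_real m * of_real h + 2 * of_real m = 0"
    using arg_cong[OF Hc(2), of complex_of_real] by simp
  moreover have "complex_of_real A \<noteq> 0"
    using \<open>0 < A\<close> by simp
  ultimately have p_Taylor:
    "p z = p0 + p2 * (z - h)^2 + p3 * (z - h)^3 + of_real (A^2) * (z - h)^4" for z :: complex
    using Taylor_expansion_above_Rc[of "of_real R" "of_real h" z, folded A_complex m_complex]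
    by (simp add: p_def p0_def p2_def p3_def)
  have "p2 / p0 < 0" "0 < p3 / p0" "A^2 / p0 < 0"
    using \<open>p0 < 0\<close> \<open>0 < p2\<close> \<open>p3 < 0\<close> \<open>0 < A\<close> by (simp_all add: divide_pos_neg divide_neg_neg)
  then have "quartic_critical (xR R) h (p2 / p0) (p3 / p0) (A^2 / p0)"
    unfolding xR_eq using Hc(5) by (intro quartic_critical_quotient[OF p_Taylor]) (simp_all add: p_def)
  then show ?thesis
    using \<open>p2 / p0 < 0\<close> unfolding h_def by fastforce
qed

theorem lemma13:
  fixes R :: real
  assumes "R1 < R" and "R < Rinf"
  shows "complex_of_real (Hc R) \<in> closure (H0 R)
     \<and> deriv (xR R) (complex_of_real (Hc R)) = 0
     \<and> (\<forall>z \<in> closure (H0 R). deriv (xR R) z = 0 \<longrightarrow> z = complex_of_real (Hc R))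
     \<and> (R \<noteq> Rc \<longrightarrow> (deriv ^^ 2) (xR R) (complex_of_real (Hc R)) \<noteq> 0)
     \<and> (R = Rc \<longrightarrow> (deriv ^^ 2) (xR R) (complex_of_real (Hc R)) = 0
                  \<and> (deriv ^^ 3) (xR R) (complex_of_real (Hc R)) \<noteq> 0)"
proof -
  obtain a b c where quartic: "quartic_critical (xR R) (Hc R) a b c" and "a = 0 \<longleftrightarrow> R = Rc"
  proof (cases "R \<le> Rc")
    case True
    then show ?thesis
      using xR_quartic_below_Rc assms(1) that by blast
  next
    case False
    then have "Rc < R"
      by simp
    then obtain a b c where "quartic_critical (xR R) (Hc R) a b c" and "a \<noteq> 0"
      using xR_quartic_above_Rc assms(2) by blast
    then show ?thesis
      using that[of a b c] \<open>Rc < R\<close> by simp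
  qed
  interpret quartic_critical "xR R" "Hc R" a b c
    by (fact quartic)
  have "Re z \<le> Hc R" if "z \<in> closure (H0 R)" for z
    using that closure_component_subset_halfplane unfolding H0_def by blast
  then show ?thesis
    using center_in_closure_component deriv_x_eq_0_imp_center derivs_x_center b_pos
      \<open>a = 0 \<longleftrightarrow> R = Rc\<close>
    by (auto simp: H0_def)
qed

end
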